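(* There is a multi-valued function $F: [0,1] \Rightarrow \mathbb{R}$ such that $F(x)$ is closed for every $x\in[0,1]$, the graph of $F$ is a $\Pi^0_2$ subset of $[0,1]\times\mathbb{R}$, and the set of points of continuity of $F$ is not a $\Pi^0_3$ subset of $[0,1]$.
   Context: A multi-valued function $F: X \Rightarrow Y$ assigns to each $x$ a nonempty set $F(x)\subseteq Y$ and is identified with its graph $\{(x,y): y\in F(x)\}\subseteq X\times Y$. For metric spaces $(X,p),(Y,d)$, $F$ is continuous at $x$ if there is some $y \in F(x)$ such that for every $\varepsilon>0$ there is $\delta>0$ such that for every $x' \in B_p(x,\delta)$ there is $y' \in F(x')$ with $d(y,y')<\varepsilon$. Borel hierarchy: $\Sigma^0_1$ = open; $\Sigma^0_{n+1}$ = countable unions of sets whose complements are $\Sigma^0_k$ for some $k\le n$; $\Pi^0_n$ = complements of $\Sigma^0_n$ sets ($\Pi^0_2=G_\delta$, $\Pi^0_3$ = countable intersections of $F_\sigma$ sets). *)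

theory Defs
  imports "HOL-Analysis.Analysis"
begin

text \<open>Boldface Borel hierarchy relative to a topological space T.
  borel_levels n T = (Sigma^0_n sets, union of Pi^0_k sets for 1 <= k <= n).
  Index 0 is unused (empty).\<close>

fun borel_levels :: "nat \<Rightarrow> 'a topology \<Rightarrow> 'a set set \<times> 'a set set" where
  "borel_levels 0 T = ({}, {})"
| "borel_levels (Suc 0) T =
     (Collect (openin T), {topspace T - S | S. openin T S})"
| "borel_levels (Suc (Suc n)) T =
     (let c = snd (borel_levels (Suc n) T);
          s = {\<Union>\<U> | \<U>. countable \<U> \<and> \<U> \<subseteq> c}
      in (s, c \<union> {topspace T - S | S. S \<in> s}))"

definition Sigma0 :: "nat \<Rightarrow> 'a topology \<Rightarrow> 'a set set" where
  "Sigma0 n T = fst (borel_levels n T)"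

definition Pi0 :: "nat \<Rightarrow> 'a topology \<Rightarrow> 'a set set" where
  "Pi0 n T = {topspace T - S | S. S \<in> Sigma0 n T}"

definition mv_continuous_at ::
  "('a::metric_space \<Rightarrow> 'b::metric_space set) \<Rightarrow> 'a set \<Rightarrow> 'a \<Rightarrow> bool" where
  "mv_continuous_at F X x \<longleftrightarrow>
     (\<exists>y\<in>F x. \<forall>\<epsilon>>0. \<exists>\<delta>>0. \<forall>x'\<in>X. dist x x' < \<delta> \<longrightarrow>
        (\<exists>y'\<in>F x'. dist y y' < \<epsilon>))"

end

theory Submission
  imports Defs "HOL-Library.Nat_Bijection"
begin

text \<open>Let \<open>cantor\<close> map binary sequences onto the Cantor set, and split \<open>\<nat>\<close> into infinitely
  many infinite rows via the pairing bijection. At \<open>cantor b\<close> the value of \<open>F\<close> is the closure of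
  points \<open>row_label p\<close>, one for each \<open>p\<close> with \<open>b p\<close>, which accumulate at the integer \<open>m\<close> exactly
  when row \<open>m\<close> of \<open>b\<close> is infinite; off the Cantor set \<open>F = \<nat>\<close>. Since the removed middle
  thirds approach every point of the Cantor set, \<open>F\<close> is continuous at \<open>cantor b\<close> iff some row of
  \<open>b\<close> is infinite. A fusion argument shows that no countable union of \<open>G\<^sub>\<delta>\<close> sets can contain
  the sequences with all rows finite without also meeting the others, so the continuity set is not
  \<open>\<Pi>\<^sup>0\<^sub>3\<close>; the graph, on the other hand, is an explicit \<open>G\<^sub>\<delta>\<close> set.\<close>

section \<open>Borel classes\<close>

lemma closedin_eq_complement_openin:
  "Collect (closedin T) = {topspace T - S | S. openin T S}"
  by (auto simp: closedin_def) (metis Diff_Diff_Int inf.absorb2)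

lemma borel_levels_2:
  "borel_levels 2 T = (Collect (fsigma_in T), Collect (closedin T) \<union> {topspace T - S | S. fsigma_in T S})"
  by (simp add: numeral_2_eq_2 Let_def fsigma_in_def union_of_def
      flip: closedin_eq_complement_openin) blast

lemma Pi0_2_eq_gdelta_in: "Pi0 2 T = Collect (gdelta_in T)"
  by (auto simp: Pi0_def Sigma0_def borel_levels_2 gdelta_in_fsigma_in fsigma_in_subset double_diff)
     (metis double_diff order_refl)

lemma Sigma0_3_eq: "Sigma0 3 T = {\<Union>\<U> | \<U>. countable \<U> \<and> \<U> \<subseteq> snd (borel_levels 2 T)}"
  unfolding Sigma0_def numeral_3_eq_3 numeral_2_eq_2 by (simp only: borel_levels.simps Let_def fst_conv)

lemma Sigma0_3_imp_countable_union_gdelta_in: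
  assumes "metrizable_space T" "S \<in> Sigma0 3 T"
  shows "(countable union_of gdelta_in T) S"
proof -
  have "gdelta_in T (topspace T - F)" if "fsigma_in T F" for F
    using that by (simp add: gdelta_in_fsigma_in fsigma_in_subset double_diff)
  then have "snd (borel_levels 2 T) \<subseteq> Collect (gdelta_in T)"
    using closed_imp_gdelta_in[OF assms(1)] by (auto simp: borel_levels_2)
  then show ?thesis
    using assms(2) by (auto simp: Sigma0_3_eq union_of_def)
qed

lemma gdelta_in_euclidean_iff:
  "gdelta_in euclidean G \<longleftrightarrow> (\<exists>W :: nat \<Rightarrow> 'a::topological_space set. (\<forall>n. open (W n)) \<and> G = (\<Inter>n. W n))"
proof
  assume "gdelta_in euclidean G"
  then obtain C where "\<forall>n. openin euclidean (C n)" "\<forall>n. C (Suc n) \<subseteq> C n" "\<Inter>(range C) = G"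
    unfolding gdelta_in_descending by (elim exE conjE) (rule that)
  then have "\<forall>n. open (C n)" "G = (\<Inter>n. C n)" by simp_all
  then show "\<exists>W :: nat \<Rightarrow> 'a set. (\<forall>n. open (W n)) \<and> G = (\<Inter>n. W n)" by blast
next
  assume "\<exists>W :: nat \<Rightarrow> 'a set. (\<forall>n. open (W n)) \<and> G = (\<Inter>n. W n)"
  then obtain W :: "nat \<Rightarrow> 'a set" where W: "\<forall>n. open (W n)" "G = (\<Inter>n. W n)"
    by (elim exE conjE) (rule that)
  show "gdelta_in euclidean G"
    unfolding W(2) by (rule gdelta_in_Inter) (use W(1) in \<open>auto simp: open_imp_gdelta_in\<close>)
qed

lemma gdelta_in_top_of_set_iff:
  "gdelta_in (top_of_set X) T \<longleftrightarrow>
     (\<exists>W :: nat \<Rightarrow> 'a::topological_space set. (\<forall>n. open (W n)) \<and> T = X \<inter> (\<Inter>n. W n))"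
  unfolding gdelta_in_subtopology gdelta_in_euclidean_iff by (metis inf_commute)

lemma countable_union_gdelta_in_top_of_set:
  fixes S :: "'a::metric_space set"
  assumes "(countable union_of gdelta_in (top_of_set X)) S"
  shows "\<exists>W :: nat \<Rightarrow> nat \<Rightarrow> 'a set. (\<forall>k j. open (W k j)) \<and> S = (\<Union>k. X \<inter> (\<Inter>j. W k j))"
proof -
  obtain T where T: "\<And>k::nat. gdelta_in (top_of_set X) (T k)" "\<Union>(range T) = S"
    using assms unfolding countable_union_of_explicit[of "gdelta_in (top_of_set X)", OF gdelta_in_empty]
    by blast
  have "\<forall>k. \<exists>W. (\<forall>j::nat. open (W j)) \<and> T k = X \<inter> (\<Inter>j. W j)"
    using T(1) by (simp add: gdelta_in_top_of_set_iff)
  then obtain W where "\<forall>k. (\<forall>j::nat. open (W k j)) \<and> T k = X \<inter> (\<Inter>j. W k j)"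
    by (rule choice[THEN exE])
  with T(2) show ?thesis by (intro exI[of _ W]) auto
qed

lemma Pi0_3_imp_complement_countable_union_gdelta_in:
  assumes "metrizable_space T" "C \<in> Pi0 3 T"
  shows "(countable union_of gdelta_in T) (topspace T - C)"
proof -
  obtain S where S: "C = topspace T - S" "S \<in> Sigma0 3 T"
    using assms(2) unfolding Pi0_def by blast
  have "(countable union_of gdelta_in T) S"
    using assms(1) S(2) by (rule Sigma0_3_imp_countable_union_gdelta_in)
  moreover from this obtain \<U> where "\<U> \<subseteq> Collect (gdelta_in T)" "\<Union>\<U> = S"
    unfolding union_of_def by blast
  then have "S \<subseteq> topspace T" using gdelta_in_subset by blast
  ultimately show ?thesis using S(1) by (simp add: double_diff)
qed

lemma Pi0_3_top_of_set_complement: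
  fixes C :: "'a::metric_space set"
  assumes "C \<in> Pi0 3 (top_of_set X)"
  shows "\<exists>W :: nat \<Rightarrow> nat \<Rightarrow> 'a set. (\<forall>k j. open (W k j)) \<and> X - C = (\<Union>k. X \<inter> (\<Inter>j. W k j))"
proof -
  have "(countable union_of gdelta_in (top_of_set X)) (topspace (top_of_set X) - C)"
    using metrizable_space_subtopology[OF metrizable_space_euclidean] assms
    by (rule Pi0_3_imp_complement_countable_union_gdelta_in)
  then have "(countable union_of gdelta_in (top_of_set X)) (X - C)" by simp
  then show ?thesis by (rule countable_union_gdelta_in_top_of_set)
qed

section \<open>The Cantor embedding\<close>

definition agree_below :: "nat \<Rightarrow> (nat \<Rightarrow> 'a) \<Rightarrow> (nat \<Rightarrow> 'a) \<Rightarrow> bool" where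
  "agree_below n a b \<longleftrightarrow> (\<forall>i<n. a i = b i)"

lemma agree_below_mono: "agree_below n a b \<Longrightarrow> m \<le> n \<Longrightarrow> agree_below m a b"
  by (auto simp: agree_below_def)

lemma agree_below_trans: "agree_below n a b \<Longrightarrow> agree_below n b c \<Longrightarrow> agree_below n a c"
  by (auto simp: agree_below_def)

lemma agree_below_diagonal_limit:
  assumes L: "strict_mono L" and s: "\<And>j. agree_below (L j) (s j) (s (Suc j))"
  shows "agree_below (L j) (s j) (\<lambda>i. s (Suc i) i)"
proof -
  have chain: "agree_below (L j) (s j) (s (j + d))" for j d
  proof (induction d)
    case 0 then show ?case by (simp add: agree_below_def)
  next
    case (Suc d)
    have "L j \<le> L (j + d)" using L by (simp add: strict_mono_less_eq)
    then show ?case using Suc agree_below_mono[OF s[of "j + d"]] agree_below_trans by fastforce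
  qed
  show ?thesis
    unfolding agree_below_def
  proof (intro allI impI)
    fix i assume i: "i < L j"
    show "s j i = s (Suc i) i"
    proof (cases "j \<le> Suc i")
      case True
      then obtain d where "Suc i = j + d" using le_Suc_ex by blast
      then show ?thesis using chain[of j d] i by (simp add: agree_below_def)
    next
      case False
      then obtain d where d: "j = Suc i + d" by (metis le_Suc_ex nat_le_linear)
      have "i < L (Suc i)" using strict_mono_imp_increasing[OF L, of "Suc i"] by simp
      then show ?thesis using chain[of "Suc i" d] d by (simp add: agree_below_def)
    qed
  qed
qed

definition cantor_term :: "(nat \<Rightarrow> bool) \<Rightarrow> nat \<Rightarrow> real" where
  "cantor_term b i = (if b i then 2 else 0) / 3 ^ Suc i"

definition cantor :: "(nat \<Rightarrow> bool) \<Rightarrow> real" where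
  "cantor b = (\<Sum>i. cantor_term b i)"

lemma sums_two_over_powers_of_three: "(\<lambda>i. 2 / 3 ^ Suc i :: real) sums 1"
proof -
  have "(\<lambda>i. (2/3) * (1/3::real) ^ i) sums ((2/3) * (1 / (1 - 1/3)))"
    by (intro sums_mult geometric_sums) simp
  moreover have "(\<lambda>i. (2/3) * (1/3::real) ^ i) = (\<lambda>i. 2 / 3 ^ Suc i)"
    by (simp add: field_simps)
  ultimately show ?thesis by simp
qed

lemma cantor_term_bounds: "0 \<le> cantor_term b i" "cantor_term b i \<le> 2 / 3 ^ Suc i"
  by (auto simp: cantor_term_def)

lemma summable_cantor_term: "summable (cantor_term b)"
  by (rule summable_comparison_test[where g="\<lambda>i. 2 / 3 ^ Suc i"])
     (use cantor_term_bounds sums_two_over_powers_of_three sums_summable in auto)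

lemma cantor_bounds: "0 \<le> cantor b" "cantor b \<le> 1"
proof -
  show "0 \<le> cantor b"
    unfolding cantor_def by (intro suminf_nonneg summable_cantor_term cantor_term_bounds)
  have "cantor b \<le> (\<Sum>i. 2 / 3 ^ Suc i)"
    unfolding cantor_def
    by (rule suminf_le)
       (use cantor_term_bounds summable_cantor_term sums_two_over_powers_of_three sums_summable in auto)
  then show "cantor b \<le> 1" using sums_two_over_powers_of_three sums_unique by fastforce
qed

lemma cantor_in_unit_interval: "cantor b \<in> {0..1}"
  using cantor_bounds[of b] by simp

lemma cantor_const: "cantor (\<lambda>_. False) = 0" "cantor (\<lambda>_. True) = 1"
  using sums_two_over_powers_of_three sums_unique by (fastforce simp: cantor_def cantor_term_def)+

lemma cantor_split:
  "cantor b = (\<Sum>i<k. cantor_term b i) + cantor (\<lambda>n. b (n + k)) / 3 ^ k"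
proof -
  have "cantor b = (\<Sum>n. cantor_term b (n + k)) + (\<Sum>i<k. cantor_term b i)"
    unfolding cantor_def by (rule suminf_split_initial_segment[OF summable_cantor_term])
  moreover have "(\<lambda>n. cantor_term b (n + k)) = (\<lambda>n. cantor_term (\<lambda>n. b (n + k)) n / 3 ^ k)"
    by (auto simp: cantor_term_def power_add field_simps)
  ultimately show ?thesis
    by (simp add: cantor_def suminf_divide[OF summable_cantor_term])
qed

lemma cantor_diff_split:
  assumes "agree_below k a b"
  shows "cantor a - cantor b = (cantor (\<lambda>n. a (n + k)) - cantor (\<lambda>n. b (n + k))) / 3 ^ k"
proof -
  have "(\<Sum>i<k. cantor_term a i) = (\<Sum>i<k. cantor_term b i)"
    using assms by (auto simp: agree_below_def cantor_term_def intro!: sum.cong)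
  then show ?thesis
    using cantor_split[of a k] cantor_split[of b k] by (simp add: diff_divide_distrib)
qed

lemma dist_cantor_le_if_agree_below:
  assumes "agree_below k a b"
  shows "\<bar>cantor a - cantor b\<bar> \<le> 1 / 3 ^ k"
proof -
  have "\<bar>cantor (\<lambda>n. a (n + k)) - cantor (\<lambda>n. b (n + k))\<bar> \<le> 1"
    using cantor_bounds[of "\<lambda>n. a (n + k)"] cantor_bounds[of "\<lambda>n. b (n + k)"] by linarith
  then show ?thesis
    by (simp add: cantor_diff_split[OF assms] divide_right_mono)
qed

lemma cantor_first_digit: "cantor b = (if b 0 then 2 else 0) / 3 + cantor (\<lambda>n. b (Suc n)) / 3"
  using cantor_split[of b 1] by (simp add: cantor_term_def)

lemma dist_cantor_ge_if_first_difference: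
  assumes "agree_below i a b" "a i \<noteq> b i"
  shows "1 / 3 ^ Suc i \<le> \<bar>cantor a - cantor b\<bar>"
proof -
  let ?a = "\<lambda>n. a (n + i)" and ?b = "\<lambda>n. b (n + i)"
  have "1 / 3 \<le> \<bar>cantor ?a - cantor ?b\<bar>"
    using cantor_first_digit[of ?a] cantor_first_digit[of ?b] assms(2)
      cantor_bounds[of "\<lambda>n. ?a (Suc n)"] cantor_bounds[of "\<lambda>n. ?b (Suc n)"]
    by (cases "a i") auto
  then have "(1 / 3) / 3 ^ i \<le> \<bar>cantor ?a - cantor ?b\<bar> / 3 ^ i"
    by (intro divide_right_mono) auto
  then show ?thesis
    by (simp add: cantor_diff_split[OF assms(1)])
qed

lemma agree_below_if_dist_cantor_less:
  "\<bar>cantor a - cantor b\<bar> < 1 / 3 ^ n \<Longrightarrow> agree_below n a b"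
proof (induction n)
  case 0 then show ?case by (simp add: agree_below_def)
next
  case (Suc n)
  have "(1::real) / 3 ^ Suc n \<le> 1 / 3 ^ n" by (simp add: field_simps)
  then have "agree_below n a b" using Suc by linarith
  moreover have "a n = b n"
    using dist_cantor_ge_if_first_difference[OF \<open>agree_below n a b\<close>] Suc.prems by force
  ultimately show ?case by (auto simp: agree_below_def less_Suc_eq)
qed

lemma inj_cantor: "inj cantor"
proof (rule injI, rule ext)
  fix a b i assume "cantor a = cantor b"
  then have "agree_below (Suc i) a b" by (intro agree_below_if_dist_cantor_less) simp
  then show "a i = b i" by (simp add: agree_below_def)
qed

lemma closed_range_cantor: "closed (range cantor)"
proof -
  have "x \<in> range cantor" if x: "x \<in> closure (range cantor)" for x
  proof -
    have "\<forall>j. \<exists>b. \<bar>cantor b - x\<bar> < 1 / (2 * 3 ^ j)"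
      using x by (auto simp: closure_approachable dist_real_def)
    then obtain B where B: "\<And>j. \<bar>cantor (B j) - x\<bar> < 1 / (2 * 3 ^ j)" by metis
    have B_agree: "agree_below j (B j) (B j')" if "j \<le> j'" for j j'
    proof (rule agree_below_if_dist_cantor_less)
      have "(1::real) / (2 * 3 ^ j') \<le> 1 / (2 * 3 ^ j)" using that by (simp add: field_simps)
      then show "\<bar>cantor (B j) - cantor (B j')\<bar> < 1 / 3 ^ j"
        using B[of j] B[of j'] by linarith
    qed
    define b where "b = (\<lambda>i. B (Suc i) i)"
    have b_agree: "agree_below j (B j) b" for j
      unfolding b_def by (rule agree_below_diagonal_limit) (auto intro: strict_monoI B_agree)
    have "\<bar>cantor b - x\<bar> \<le> 2 / 3 ^ j" for j
      using dist_cantor_le_if_agree_below[OF b_agree[of j]] B[of j] by linarith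
    then have "\<bar>cantor b - x\<bar> \<le> 0"
      by (intro LIMSEQ_le_const[OF LIMSEQ_divide_realpow_zero]) auto
    then show ?thesis by (metis abs_le_zero_iff eq_iff_diff_eq_0 rangeI)
  qed
  then show ?thesis by (metis closure_subset_eq subsetI)
qed

lemma cantor_ne_half: "cantor b \<noteq> 1 / 2"
  using cantor_first_digit[of b] cantor_bounds[of "\<lambda>n. b (Suc n)"] by (cases "b 0") auto

lemma exists_inverse_power_three_less:
  fixes e :: real
  assumes "0 < e"
  obtains n where "c / 3 ^ n < e"
proof -
  have "(\<lambda>n. c / 3 ^ n :: real) \<longlonglongrightarrow> 0" by (rule LIMSEQ_divide_realpow_zero) simp
  then have "eventually (\<lambda>n. c / 3 ^ n < e) sequentially"
    using assms by (rule order_tendstoD)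
  then show ?thesis using that by (auto dest: eventually_happens)
qed

text \<open>The centre of the middle third removed at level \<open>L\<close> next to \<open>cantor b\<close>.\<close>

lemma exists_gap_point_near_cantor:
  assumes "0 < e"
  shows "\<exists>x\<in>{0..1}. x \<notin> range cantor \<and> \<bar>x - cantor b\<bar> < e"
proof -
  obtain L where L: "2 / 3 ^ L < e" using exists_inverse_power_three_less[OF assms] .
  define lo where "lo i = (i < L \<and> b i)" for i
  define hi where "hi i = (i < L \<longrightarrow> b i)" for i
  define x where "x = cantor lo + 1 / (2 * 3 ^ L)"
  have half: "0 < 1 / (2 * 3 ^ L :: real)" "1 / (2 * 3 ^ L) < (1::real) / 3 ^ L"
    by (simp_all add: field_simps)
  have "agree_below L hi lo" "agree_below L lo b"
    by (simp_all add: agree_below_def lo_def hi_def)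
  have "cantor hi - cantor lo = 1 / 3 ^ L"
    using cantor_diff_split[OF \<open>agree_below L hi lo\<close>] by (simp add: lo_def hi_def cantor_const)
  then have "x \<in> {0..1}"
    using cantor_bounds[of lo] cantor_bounds[of hi] half by (simp add: x_def)
  moreover have "x \<notin> range cantor"
  proof
    assume "x \<in> range cantor"
    then obtain c where c: "cantor c = x" by auto
    then have "\<bar>cantor c - cantor lo\<bar> < 1 / 3 ^ L" using half by (simp add: x_def)
    then have "agree_below L c lo" by (rule agree_below_if_dist_cantor_less)
    then have "cantor (\<lambda>n. c (n + L)) / 3 ^ L = 1 / (2 * 3 ^ L)"
      using cantor_diff_split[of L c lo] c by (simp add: x_def lo_def cantor_const)
    then show False using cantor_ne_half[of "\<lambda>n. c (n + L)"] by (simp add: field_simps)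
  qed
  moreover have "\<bar>x - cantor b\<bar> < e"
    using dist_cantor_le_if_agree_below[OF \<open>agree_below L lo b\<close>] L half
    by (simp add: x_def abs_le_iff abs_less_iff)
  ultimately show ?thesis by blast
qed

section \<open>Rows and a fusion argument\<close>

definition row_of :: "nat \<Rightarrow> nat" where
  "row_of p = fst (prod_decode p)"

definition finite_rows :: "(nat \<Rightarrow> bool) \<Rightarrow> bool" where
  "finite_rows b \<longleftrightarrow> (\<forall>m. finite {p. row_of p = m \<and> b p})"

lemma row_of_prod_encode [simp]: "row_of (prod_encode (m, n)) = m"
  by (simp add: row_of_def)

text \<open>A stage \<open>(L, s)\<close> fixes the digits below \<open>L\<close>; at level \<open>k\<close>, later stages and the limit
  must keep the rows \<open>< k\<close> empty from \<open>L\<close> on.\<close>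

definition extends :: "nat \<Rightarrow> nat \<Rightarrow> (nat \<Rightarrow> bool) \<Rightarrow> nat \<Rightarrow> (nat \<Rightarrow> bool) \<Rightarrow> bool" where
  "extends k L s L' s' \<longleftrightarrow>
     L \<le> L' \<and> agree_below L s s' \<and> (\<forall>i. L \<le> i \<and> i < L' \<and> row_of i < k \<longrightarrow> \<not> s' i)"

definition compatible :: "nat \<Rightarrow> nat \<Rightarrow> (nat \<Rightarrow> bool) \<Rightarrow> (nat \<Rightarrow> bool) \<Rightarrow> bool" where
  "compatible k L s b \<longleftrightarrow> agree_below L s b \<and> (\<forall>i\<ge>L. row_of i < k \<longrightarrow> \<not> b i)"

lemma extends_refl: "extends k L s L s"
  by (auto simp: extends_def agree_below_def)

lemma extends_trans: "extends k L s L1 s1 \<Longrightarrow> extends k L1 s1 L2 s2 \<Longrightarrow> extends k L s L2 s2"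
  unfolding extends_def agree_below_def by (metis not_le order.strict_trans2)

lemma extends_mono: "extends k' L s L' s' \<Longrightarrow> k \<le> k' \<Longrightarrow> extends k L s L' s'"
  unfolding extends_def by auto

lemma compatible_if_extends: "extends k L s L' s' \<Longrightarrow> compatible k L' s' b \<Longrightarrow> compatible k L s b"
  unfolding extends_def compatible_def agree_below_def by (metis not_le order.strict_trans2)

lemma extends_into_open:
  assumes U: "open U" "cantor b \<in> U" and b: "compatible k L s b"
  shows "\<exists>L' s'. extends k L s L' s' \<and> (\<exists>q\<ge>L. q < L' \<and> row_of q = k \<and> s' q) \<and>
    (\<forall>b'. agree_below L' s' b' \<longrightarrow> cantor b' \<in> U)"
proof -
  obtain e where e: "e > 0" "ball (cantor b) e \<subseteq> U" using U open_contains_ball by blast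
  obtain n where n: "1 / 3 ^ n < e" using exists_inverse_power_three_less[OF e(1)] .
  define M where "M = max n (Suc L)"
  define q where "q = prod_encode (k, M)"
  define s' where "s' i = (if i < M then b i else i = q)" for i
  have "M \<le> q" by (simp add: q_def le_prod_encode_2)
  have "extends k L s (Suc q) s'"
    using b \<open>M \<le> q\<close> by (auto simp: extends_def compatible_def agree_below_def s'_def M_def q_def)
  moreover have "L \<le> q" "row_of q = k" "s' q" using \<open>M \<le> q\<close> by (auto simp: M_def q_def s'_def)
  moreover have "cantor b' \<in> U" if "agree_below (Suc q) s' b'" for b'
  proof -
    have "agree_below M b s'" by (simp add: agree_below_def s'_def)
    moreover have "agree_below M s' b'" using that \<open>M \<le> q\<close> by (simp add: agree_below_mono)
    ultimately have "agree_below M b b'" by (rule agree_below_trans)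
    then have "\<bar>cantor b - cantor b'\<bar> \<le> 1 / 3 ^ M" by (rule dist_cantor_le_if_agree_below)
    moreover have "(1::real) / 3 ^ M \<le> 1 / 3 ^ n" by (simp add: M_def field_simps)
    ultimately show ?thesis using e n by (auto simp: dist_real_def subset_iff)
  qed
  ultimately show ?thesis by (intro exI[of _ "Suc q"] exI[of _ s']) auto
qed

lemma dependent_nat_choice_pair:
  assumes "P 0 a b" and "\<And>n x y. P n x y \<Longrightarrow> \<exists>x' y'. P (Suc n) x' y' \<and> Q n x y x' y'"
  shows "\<exists>X Y. \<forall>n. P n (X n) (Y n) \<and> Q n (X n) (Y n) (X (Suc n)) (Y (Suc n))"
proof -
  have "\<exists>f. \<forall>n. P n (fst (f n)) (snd (f n)) \<and>
      Q n (fst (f n)) (snd (f n)) (fst (f (Suc n))) (snd (f (Suc n)))"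
    by (rule dependent_nat_choice) (use assms in auto)
  then show ?thesis by (metis comp_apply)
qed

lemma infinite_row_in_gdelta_if_unavoidable:
  fixes W :: "nat \<Rightarrow> real set"
  assumes W: "\<And>j. open (W j)"
    and unavoidable: "\<And>L' s'. extends k L s L' s' \<Longrightarrow> \<exists>b. compatible k L' s' b \<and> (\<forall>j. cantor b \<in> W j)"
  shows "\<exists>b. (\<forall>j. cantor b \<in> W j) \<and> infinite {p. row_of p = k \<and> b p}"
proof -
  have "\<exists>Ls ss. \<forall>j. extends k L s (Ls j) (ss j) \<and>
      extends k (Ls j) (ss j) (Ls (Suc j)) (ss (Suc j)) \<and>
      (\<exists>q\<ge>Ls j. q < Ls (Suc j) \<and> row_of q = k \<and> ss (Suc j) q) \<and>
      (\<forall>b'. agree_below (Ls (Suc j)) (ss (Suc j)) b' \<longrightarrow> cantor b' \<in> W j)"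
  proof (rule dependent_nat_choice_pair)
    show "extends k L s L s" by (rule extends_refl)
  next
    fix j L1 s1 assume "extends k L s L1 s1"
    with unavoidable obtain b where "compatible k L1 s1 b" "cantor b \<in> W j" by blast
    from extends_into_open[OF W this(2,1)] obtain L2 s2 where "extends k L1 s1 L2 s2"
      "\<exists>q\<ge>L1. q < L2 \<and> row_of q = k \<and> s2 q" "\<forall>b'. agree_below L2 s2 b' \<longrightarrow> cantor b' \<in> W j"
      by blast
    with \<open>extends k L s L1 s1\<close> show "\<exists>L2 s2. extends k L s L2 s2 \<and> extends k L1 s1 L2 s2 \<and>
        (\<exists>q\<ge>L1. q < L2 \<and> row_of q = k \<and> s2 q) \<and> (\<forall>b'. agree_below L2 s2 b' \<longrightarrow> cantor b' \<in> W j)"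
      by (blast intro: extends_trans)
  qed
  then obtain Ls ss where step: "\<And>j. extends k (Ls j) (ss j) (Ls (Suc j)) (ss (Suc j))"
      and new_one: "\<And>j. \<exists>q\<ge>Ls j. q < Ls (Suc j) \<and> row_of q = k \<and> ss (Suc j) q"
      and into_W: "\<And>j b'. agree_below (Ls (Suc j)) (ss (Suc j)) b' \<Longrightarrow> cantor b' \<in> W j"
    by blast
  define b where "b i = ss (Suc i) i" for i
  have "Ls j < Ls (Suc j)" for j
    using new_one[of j] by auto
  then have "strict_mono Ls" by (rule strict_monoI_Suc)
  moreover have "agree_below (Ls j) (ss j) (ss (Suc j))" for j
    using step[of j] by (simp add: extends_def)
  ultimately have b_agree: "agree_below (Ls j) (ss j) b" for j
    unfolding b_def by (rule agree_below_diagonal_limit)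
  have "infinite {p. row_of p = k \<and> b p}"
    unfolding infinite_nat_iff_unbounded_le
  proof
    fix j
    obtain q where q: "Ls j \<le> q" "q < Ls (Suc j)" "row_of q = k" "ss (Suc j) q"
      using new_one[of j] by blast
    moreover have "j \<le> Ls j" using strict_mono_imp_increasing[OF \<open>strict_mono Ls\<close>] .
    moreover have "b q" using b_agree[of "Suc j"] q by (simp add: agree_below_def)
    ultimately show "\<exists>p\<ge>j. p \<in> {p. row_of p = k \<and> b p}" by (intro exI[of _ q]) auto
  qed
  moreover have "cantor b \<in> W j" for j
    using into_W b_agree[of "Suc j"] by blast
  ultimately show ?thesis by blast
qed

lemma extends_avoiding_gdelta:
  fixes W :: "nat \<Rightarrow> real set"
  assumes "\<And>j. open (W j)"
    and "\<And>b. (\<forall>j. cantor b \<in> W j) \<Longrightarrow> finite {p. row_of p = k \<and> b p}"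
  shows "\<exists>L' s'. extends k L s L' s' \<and> L < L' \<and> (\<forall>b. compatible k L' s' b \<longrightarrow> (\<exists>j. cantor b \<notin> W j))"
proof -
  obtain L' s' where L's': "extends k L s L' s'" "\<forall>b. compatible k L' s' b \<longrightarrow> (\<exists>j. cantor b \<notin> W j)"
    using infinite_row_in_gdelta_if_unavoidable[of W k L s] assms by blast
  have pad: "extends k L' s' (Suc L') (s'(L' := False))"
    by (auto simp: extends_def agree_below_def)
  show ?thesis
    using extends_trans[OF L's'(1) pad] L's' compatible_if_extends[OF pad]
    by (intro exI[of _ "Suc L'"] exI[of _ "s'(L' := False)"]) (auto simp: extends_def)
qed

lemma extends_iterate:
  assumes "\<And>j. extends j (Ls j) (ss j) (Ls (Suc j)) (ss (Suc j))"
  shows "m \<le> n \<Longrightarrow> extends m (Ls m) (ss m) (Ls n) (ss n)"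
proof (induction n rule: dec_induct)
  case base then show ?case by (rule extends_refl)
next
  case (step n)
  then show ?case using extends_mono[OF assms[of n]] extends_trans by blast
qed

lemma compatible_diagonal_limit:
  assumes step: "\<And>j. extends j (Ls j) (ss j) (Ls (Suc j)) (ss (Suc j))" and "strict_mono Ls"
  shows "compatible k (Ls (Suc k)) (ss (Suc k)) (\<lambda>i. ss (Suc i) i)"
  unfolding compatible_def
proof (intro conjI allI impI)
  show "agree_below (Ls (Suc k)) (ss (Suc k)) (\<lambda>i. ss (Suc i) i)"
    using \<open>strict_mono Ls\<close> step by (intro agree_below_diagonal_limit) (auto simp: extends_def)
  fix i assume i: "Ls (Suc k) \<le> i" "row_of i < k"
  have "Suc k \<le> Ls (Suc k)" "i < Ls (Suc i)"
    using strict_mono_imp_increasing[OF \<open>strict_mono Ls\<close>, of "Suc _"] by (auto simp: Suc_le_eq)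
  moreover from this i have "extends k (Ls (Suc k)) (ss (Suc k)) (Ls (Suc i)) (ss (Suc i))"
    by (intro extends_mono[OF extends_iterate[OF step]]) auto
  ultimately show "\<not> ss (Suc i) i" using i by (simp add: extends_def)
qed

lemma finite_rows_if_compatible:
  assumes "\<And>k. compatible k (L k) (s k) b"
  shows "finite_rows b"
  unfolding finite_rows_def
proof
  fix m
  have "{p. row_of p = m \<and> b p} \<subseteq> {..< L (Suc m)}"
    using assms[of "Suc m"] by (auto simp: compatible_def not_less[symmetric])
  then show "finite {p. row_of p = m \<and> b p}" by (rule finite_subset) simp
qed

text \<open>The diagonal argument against the \<open>k\<close>-th \<open>G\<^sub>\<delta>\<close> set is run at stage \<open>k\<close>, after
  which rows \<open>< k\<close> stay empty; the limit therefore has finite rows yet lies in no \<open>G\<^sub>\<delta>\<close> set.\<close>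

lemma cantor_finite_rows_not_countable_union_gdelta:
  fixes W :: "nat \<Rightarrow> nat \<Rightarrow> real set"
  assumes W: "\<And>k j. open (W k j)"
    and covers: "\<And>b. finite_rows b \<Longrightarrow> \<exists>k. \<forall>j. cantor b \<in> W k j"
  shows "\<exists>b. \<not> finite_rows b \<and> (\<exists>k. \<forall>j. cantor b \<in> W k j)"
proof (rule ccontr)
  assume "\<not> ?thesis"
  then have row_finite: "finite {p. row_of p = k \<and> b p}" if "\<forall>j. cantor b \<in> W k j" for b k
    using that by (auto simp: finite_rows_def)
  have "\<exists>Ls ss. \<forall>k. True \<and> extends k (Ls k) (ss k) (Ls (Suc k)) (ss (Suc k)) \<and> Ls k < Ls (Suc k) \<and>
      (\<forall>b. compatible k (Ls (Suc k)) (ss (Suc k)) b \<longrightarrow> (\<exists>j. cantor b \<notin> W k j))"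
  proof (rule dependent_nat_choice_pair[where a = 0 and b = "\<lambda>_. False"])
    fix k L s
    show "\<exists>L' s'. True \<and> extends k L s L' s' \<and> L < L' \<and>
        (\<forall>b. compatible k L' s' b \<longrightarrow> (\<exists>j. cantor b \<notin> W k j))"
      using extends_avoiding_gdelta[of "W k" k L s, OF W row_finite] by blast
  qed simp
  then obtain Ls ss where step: "\<And>k. extends k (Ls k) (ss k) (Ls (Suc k)) (ss (Suc k))"
      and "\<And>k. Ls k < Ls (Suc k)"
      and avoids: "\<And>k b. compatible k (Ls (Suc k)) (ss (Suc k)) b \<Longrightarrow> \<exists>j. cantor b \<notin> W k j"
    by blast
  then have "strict_mono Ls" by (simp add: strict_monoI_Suc)
  with step have compatible: "compatible k (Ls (Suc k)) (ss (Suc k)) (\<lambda>i. ss (Suc i) i)" for k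
    by (rule compatible_diagonal_limit)
  then have "finite_rows (\<lambda>i. ss (Suc i) i)" by (rule finite_rows_if_compatible)
  then obtain k where "\<forall>j. cantor (\<lambda>i. ss (Suc i) i) \<in> W k j" using covers by blast
  with avoids[OF compatible[of k]] show False by blast
qed

section \<open>The multi-valued function\<close>

definition row_label :: "nat \<Rightarrow> real" where
  "row_label p = real (row_of p) + 1 / (real p + 3)"

text \<open>The point \<open>-1\<close> only keeps the value nonempty; it is far from every integer \<open>\<ge> 0\<close>.\<close>

definition labels :: "real \<Rightarrow> real set" where
  "labels x = insert (-1) {row_label p | p. \<exists>b. x = cantor b \<and> b p}"

definition multifun :: "real \<Rightarrow> real set" where
  "multifun x = (if x \<in> range cantor then closure (labels x) else \<nat>)"

lemma labels_cantor: "labels (cantor b) = insert (-1) {row_label p | p. b p}"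
  unfolding labels_def using injD[OF inj_cantor] by metis

lemma multifun_cantor: "multifun (cantor b) = closure (insert (-1) {row_label p | p. b p})"
  by (simp add: multifun_def labels_cantor)

lemma multifun_outside: "x \<notin> range cantor \<Longrightarrow> multifun x = \<nat>"
  by (simp add: multifun_def)

lemma multifun_nonempty: "multifun x \<noteq> {}"
  unfolding multifun_def labels_def using Nats_0 by (auto simp: closure_eq_empty)

lemma closed_multifun: "closed (multifun x)"
  by (simp add: multifun_def)

lemma dist_row_label_same_row: "dist (row_label p) (real (row_of p)) = 1 / (real p + 3)"
  by (simp add: row_label_def dist_real_def)

lemma dist_row_label_other_row:
  assumes "row_of p \<noteq> m"
  shows "2 / 3 \<le> dist (row_label p) (real m)"
proof -
  define t where "t = 1 / (real p + 3)"
  have "0 < t" "t \<le> 1 / 3" by (auto simp: t_def field_simps)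
  moreover have "1 \<le> \<bar>real (row_of p) - real m\<bar>" using assms by (cases "row_of p < m") auto
  moreover have "dist (row_label p) (real m) = \<bar>real (row_of p) - real m + t\<bar>"
    by (simp add: row_label_def dist_real_def t_def)
  ultimately show ?thesis by arith
qed

lemma exists_large_in_row:
  assumes "infinite {p. row_of p = m \<and> b p}" "0 < e"
  obtains p where "row_of p = m" "b p" "1 / (real p + 3) < e"
proof -
  obtain N where N: "inverse (real (Suc N)) < e" using reals_Archimedean assms(2) by blast
  obtain p where p: "N \<le> p" "row_of p = m" "b p"
    using assms(1) unfolding infinite_nat_iff_unbounded_le by blast
  have "1 / (real p + 3) \<le> inverse (real (Suc N))" using p(1) by (simp add: field_simps)
  with p N that show ?thesis by simp
qed

lemma dist_label_nat_ge:
  assumes B: "\<And>p. row_of p = m \<Longrightarrow> b p \<Longrightarrow> p < B"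
    and z: "z \<in> insert (-1) {row_label p | p. b p}"
  shows "1 / (real B + 3) \<le> dist z (real m)"
proof -
  have e: "1 / (real B + 3) \<le> 1 / 3" by (simp add: field_simps)
  consider "z = -1" | p where "z = row_label p" "b p" using z by blast
  then show ?thesis
  proof cases
    case 1 then show ?thesis using e by (simp add: dist_real_def, linarith)
  next
    case 2
    show ?thesis
    proof (cases "row_of p = m")
      case True
      then have "p < B" using B 2(2) by blast
      then have "1 / (real B + 3) \<le> 1 / (real p + 3)" by (simp add: field_simps)
      then show ?thesis using True 2(1) dist_row_label_same_row[of p] by simp
    next
      case False
      then have "2 / 3 \<le> dist z (real m)" unfolding 2(1) by (rule dist_row_label_other_row)
      with e show ?thesis by linarith
    qed
  qed
qed

lemma nat_in_multifun_cantor_iff: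
  "real m \<in> multifun (cantor b) \<longleftrightarrow> infinite {p. row_of p = m \<and> b p}"
proof
  assume m: "real m \<in> multifun (cantor b)"
  show "infinite {p. row_of p = m \<and> b p}"
  proof
    assume "finite {p. row_of p = m \<and> b p}"
    then obtain B where "\<And>p. row_of p = m \<Longrightarrow> b p \<Longrightarrow> p < B"
      using finite_nat_bounded by blast
    then have far: "1 / (real B + 3) \<le> dist z (real m)"
      if "z \<in> insert (-1) {row_label p | p. b p}" for z
      using that by (rule dist_label_nat_ge)
    have "0 < 1 / (real B + 3)" by simp
    with m obtain z where "z \<in> insert (-1) {row_label p | p. b p}" "dist z (real m) < 1 / (real B + 3)"
      unfolding multifun_cantor closure_approachable by blast
    with far show False by (meson not_less)
  qed
next
  assume row: "infinite {p. row_of p = m \<and> b p}"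
  show "real m \<in> multifun (cantor b)"
    unfolding multifun_cantor closure_approachable
  proof (intro allI impI)
    fix e :: real assume "0 < e"
    with row obtain p where "row_of p = m" "b p" "1 / (real p + 3) < e" by (rule exists_large_in_row)
    then show "\<exists>z\<in>insert (-1) {row_label p | p. b p}. dist z (real m) < e"
      using dist_row_label_same_row[of p] by (intro bexI[of _ "row_label p"]) auto
  qed
qed

lemma mv_continuous_at_cantor_if_infinite_row:
  assumes row: "infinite {p. row_of p = m \<and> b p}"
  shows "mv_continuous_at multifun {0..1} (cantor b)"
  unfolding mv_continuous_at_def
proof (intro bexI[of _ "real m"] allI impI)
  show "real m \<in> multifun (cantor b)" using row by (simp add: nat_in_multifun_cantor_iff)
  fix e :: real assume "0 < e"
  with row obtain p where p: "row_of p = m" "b p" "1 / (real p + 3) < e" by (rule exists_large_in_row)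
  show "\<exists>\<delta>>0. \<forall>x'\<in>{0..1}. dist (cantor b) x' < \<delta> \<longrightarrow> (\<exists>y'\<in>multifun x'. dist (real m) y' < e)"
  proof (intro exI[of _ "1 / 3 ^ Suc p"] conjI ballI impI)
    fix x' assume x': "dist (cantor b) x' < 1 / 3 ^ Suc p"
    show "\<exists>y'\<in>multifun x'. dist (real m) y' < e"
    proof (cases "x' \<in> range cantor")
      case True
      then obtain b' where b': "x' = cantor b'" by auto
      with x' have "agree_below (Suc p) b b'"
        by (intro agree_below_if_dist_cantor_less) (simp add: dist_real_def)
      then have "row_label p \<in> multifun x'"
        using b' p(2) closure_subset by (fastforce simp: multifun_cantor agree_below_def)
      then show ?thesis
        using p dist_row_label_same_row[of p] by (intro bexI[of _ "row_label p"]) (auto simp: dist_commute)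
    next
      case False
      then show ?thesis using \<open>0 < e\<close> by (intro bexI[of _ "real m"]) (auto simp: multifun_outside)
    qed
  qed simp
qed

lemma not_mv_continuous_at_cantor_if_finite_rows:
  assumes "finite_rows b"
  shows "\<not> mv_continuous_at multifun {0..1} (cantor b)"
proof
  assume "mv_continuous_at multifun {0..1} (cantor b)"
  then obtain y where y: "y \<in> multifun (cantor b)"
    and cont: "\<And>e. 0 < e \<Longrightarrow> \<exists>\<delta>>0. \<forall>x'\<in>{0..1}. dist (cantor b) x' < \<delta> \<longrightarrow>
        (\<exists>y'\<in>multifun x'. dist y y' < e)"
    unfolding mv_continuous_at_def by blast
  have "y \<notin> \<nat>"
    using y assms nat_in_multifun_cantor_iff by (auto simp: finite_rows_def elim!: Nats_cases)
  then obtain e where e: "0 < e" "ball y e \<subseteq> - \<nat>"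
    using open_contains_ball[of "- \<nat>"] by (auto simp: open_Compl)
  obtain \<delta> where "0 < \<delta>" and \<delta>: "\<forall>x'\<in>{0..1}. dist (cantor b) x' < \<delta> \<longrightarrow>
      (\<exists>y'\<in>multifun x'. dist y y' < e)"
    using cont[OF e(1)] by blast
  obtain x' where "x' \<in> {0..1}" "x' \<notin> range cantor" "\<bar>x' - cantor b\<bar> < \<delta>"
    using exists_gap_point_near_cantor[OF \<open>0 < \<delta>\<close>] by blast
  with \<delta> obtain y' where "y' \<in> \<nat>" "dist y y' < e"
    by (auto simp: multifun_outside dist_real_def abs_minus_commute)
  with e(2) show False by auto
qed

lemma mv_continuous_at_cantor_iff:
  "mv_continuous_at multifun {0..1} (cantor b) \<longleftrightarrow> \<not> finite_rows b"
proof
  assume "mv_continuous_at multifun {0..1} (cantor b)"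
  then show "\<not> finite_rows b" using not_mv_continuous_at_cantor_if_finite_rows by blast
next
  assume "\<not> finite_rows b"
  then obtain m where "infinite {p. row_of p = m \<and> b p}" by (auto simp: finite_rows_def)
  then show "mv_continuous_at multifun {0..1} (cantor b)" by (rule mv_continuous_at_cantor_if_infinite_row)
qed

definition digit_nbhd :: "nat \<Rightarrow> real set" where
  "digit_nbhd p = (\<Union>b\<in>{b. b p}. ball (cantor b) (1 / 3 ^ Suc p))"

lemma cantor_in_digit_nbhd_iff: "cantor b \<in> digit_nbhd p \<longleftrightarrow> b p"
proof
  assume "cantor b \<in> digit_nbhd p"
  then obtain b' where "b' p" and "cantor b \<in> ball (cantor b') (1 / 3 ^ Suc p)"
    unfolding digit_nbhd_def by blast
  then have "agree_below (Suc p) b' b"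
    by (intro agree_below_if_dist_cantor_less) (simp add: dist_real_def)
  with \<open>b' p\<close> show "b p" by (simp add: agree_below_def)
next
  assume "b p"
  then show "cantor b \<in> digit_nbhd p"
    unfolding digit_nbhd_def by (intro UN_I[of b]) simp_all
qed

definition label_nbhd :: "nat \<Rightarrow> (real \<times> real) set" where
  "label_nbhd j = UNIV \<times> ball (-1) (inverse (Suc j)) \<union>
     (\<Union>p. digit_nbhd p \<times> ball (row_label p) (inverse (Suc j)))"

lemma open_label_nbhd: "open (label_nbhd j)"
  unfolding label_nbhd_def digit_nbhd_def by (intro open_Un open_Times open_UN open_ball open_UNIV ballI)

lemma cantor_label_nbhd_iff:
  "(cantor b, y) \<in> label_nbhd j \<longleftrightarrow> (\<exists>z\<in>insert (-1) {row_label p | p. b p}. dist z y < inverse (Suc j))"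
  unfolding label_nbhd_def by (auto simp: cantor_in_digit_nbhd_iff dist_commute)

lemma closure_iff_dist_less_inverse_Suc:
  "y \<in> closure S \<longleftrightarrow> (\<forall>j::nat. \<exists>z\<in>S. dist z y < inverse (Suc j))"
proof
  assume "y \<in> closure S"
  then show "\<forall>j::nat. \<exists>z\<in>S. dist z y < inverse (Suc j)" by (simp add: closure_approachable)
next
  assume approx: "\<forall>j::nat. \<exists>z\<in>S. dist z y < inverse (Suc j)"
  show "y \<in> closure S"
    unfolding closure_approachable
  proof (intro allI impI)
    fix e :: real assume "0 < e"
    then obtain j where j: "inverse (real (Suc j)) < e" using reals_Archimedean by blast
    from approx obtain z where "z \<in> S" "dist z y < inverse (Suc j)" by blast
    with j show "\<exists>z\<in>S. dist z y < e" by force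
  qed
qed

lemma graph_multifun_eq:
  "{(x, y). y \<in> multifun x} = (range cantor \<times> UNIV \<inter> (\<Inter>j. label_nbhd j)) \<union> (- range cantor) \<times> \<nat>"
proof (rule set_eqI, clarify)
  fix x y
  show "(x, y) \<in> {(x, y). y \<in> multifun x} \<longleftrightarrow>
      (x, y) \<in> (range cantor \<times> UNIV \<inter> (\<Inter>j. label_nbhd j)) \<union> (- range cantor) \<times> \<nat>"
  proof (cases "x \<in> range cantor")
    case True
    then obtain b where "x = cantor b" by auto
    then show ?thesis
      by (simp add: multifun_cantor cantor_label_nbhd_iff closure_iff_dist_less_inverse_Suc)
  next
    case False
    then show ?thesis by (simp add: multifun_outside)
  qed
qed

lemma gdelta_graph_multifun: "gdelta_in euclidean {(x, y). y \<in> multifun x}"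
proof -
  have closed: "gdelta_in euclidean S" if "closed S" for S :: "(real \<times> real) set"
    using that by (metis closed_closedin closed_imp_gdelta_in metrizable_space_euclidean)
  have open': "gdelta_in euclidean S" if "open S" for S :: "(real \<times> real) set"
    using that by (simp add: open_imp_gdelta_in)
  have "gdelta_in euclidean (range cantor \<times> (UNIV :: real set))"
    by (rule closed) (simp add: closed_Times closed_range_cantor)
  moreover have "gdelta_in euclidean (\<Inter>j. label_nbhd j)"
    by (rule gdelta_in_Inter) (auto intro: open' open_label_nbhd)
  moreover have "gdelta_in euclidean (((- range cantor) \<times> UNIV) \<inter> ((UNIV :: real set) \<times> (\<nat> :: real set)))"
  proof (rule gdelta_in_Int)
    show "gdelta_in euclidean ((- range cantor) \<times> (UNIV :: real set))"
      by (rule open') (simp add: open_Times open_Compl closed_range_cantor)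
    show "gdelta_in euclidean ((UNIV :: real set) \<times> (\<nat> :: real set))"
      by (rule closed) (simp add: closed_Times closed_Nats)
  qed
  moreover have "(- range cantor) \<times> \<nat> = ((- range cantor) \<times> UNIV) \<inter> ((UNIV :: real set) \<times> (\<nat> :: real set))"
    by auto
  ultimately show ?thesis
    unfolding graph_multifun_eq by (simp add: gdelta_in_Un gdelta_in_Int)
qed

lemma graph_multifun_Pi0_2:
  "{(x, y). x \<in> A \<and> y \<in> multifun x} \<in> Pi0 2 (top_of_set (A \<times> (UNIV :: real set)))"
proof -
  have "gdelta_in (top_of_set (A \<times> UNIV)) ({(x, y). y \<in> multifun x} \<inter> (A \<times> UNIV))"
    unfolding gdelta_in_subtopology
    by (rule exI[of _ "{(x, y). y \<in> multifun x}"]) (simp add: gdelta_graph_multifun)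
  moreover have "{(x, y). x \<in> A \<and> y \<in> multifun x} = {(x, y). y \<in> multifun x} \<inter> (A \<times> UNIV)"
    by auto
  ultimately show ?thesis by (simp add: Pi0_2_eq_gdelta_in)
qed

lemma continuity_set_multifun_not_Pi0_3:
  "{x \<in> {0..1}. mv_continuous_at multifun {0..1} x} \<notin> Pi0 3 (top_of_set {0..1})"
  (is "?C \<notin> _")
proof
  assume "?C \<in> Pi0 3 (top_of_set {0..1})"
  then have "\<exists>W :: nat \<Rightarrow> nat \<Rightarrow> real set. (\<forall>k j. open (W k j)) \<and>
      {0..1} - ?C = (\<Union>k. {0..1} \<inter> (\<Inter>j. W k j))"
    by (rule Pi0_3_top_of_set_complement)
  then obtain W :: "nat \<Rightarrow> nat \<Rightarrow> real set" where W: "\<And>k j. open (W k j)"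
    and discont: "{0..1} - ?C = (\<Union>k. {0..1} \<inter> (\<Inter>j. W k j))"
    by blast
  have discont_iff: "x \<in> {0..1} - ?C \<longleftrightarrow> x \<in> {0..1} \<and> (\<exists>k. \<forall>j. x \<in> W k j)" for x
    unfolding discont by blast
  have "\<exists>k. \<forall>j. cantor b \<in> W k j" if "finite_rows b" for b
  proof -
    have "cantor b \<in> {0..1} - ?C"
      using that cantor_in_unit_interval[of b] by (simp add: mv_continuous_at_cantor_iff)
    then show ?thesis unfolding discont_iff by (elim conjE)
  qed
  then obtain b k where "\<not> finite_rows b" and in_W: "\<forall>j. cantor b \<in> W k j"
    using cantor_finite_rows_not_countable_union_gdelta[of W, OF W] by blast
  then have "cantor b \<in> ?C"
    using cantor_in_unit_interval[of b] by (simp add: mv_continuous_at_cantor_iff)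
  moreover have "cantor b \<in> {0..1} - ?C"
    using discont_iff[of "cantor b"] cantor_in_unit_interval[of b] in_W by blast
  ultimately show False by blast
qed

theorem theorem2p6:
  shows "\<exists>F :: real \<Rightarrow> real set.
     (\<forall>x\<in>{0..1}. F x \<noteq> {} \<and> closed (F x)) \<and>
     {(x, y). x \<in> {0..1} \<and> y \<in> F x} \<in> Pi0 2 (top_of_set ({0..1} \<times> (UNIV :: real set))) \<and>
     {x \<in> {0..1}. mv_continuous_at F {0..1} x} \<notin> Pi0 3 (top_of_set {0..1::real})"
proof (intro exI[of _ multifun] conjI)
  show "\<forall>x\<in>{0..1}. multifun x \<noteq> {} \<and> closed (multifun x)"
    by (simp add: multifun_nonempty closed_multifun)
qed (rule graph_multifun_Pi0_2 continuity_set_multifun_not_Pi0_3)+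

end
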